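(* Let $n\ge 2$ and let $NF_n$ be the complex Leibniz algebra with basis $\{e_1,\dots,e_n\}$ and nonzero products $[e_i,e_1]=e_{i+1}$, $1\le i\le n-1$. A pair $(d,D)$ of linear maps of $NF_n$ is a biderivation if and only if there exist $\alpha_1,\dots,\alpha_n,\beta_2,\dots,\beta_n\in\mathbb C$ such that $$d(e_i)=i\alpha_1e_i+\sum_{j=i+1}^n\alpha_{j-i+1}e_j\ (1\le i\le n),\qquad D(e_1)=\alpha_1e_1+\sum_{j=2}^n\beta_je_j,\qquad D(e_i)=0\ (2\le i\le n).$$
   Context: All algebras are over $\mathbb C$. A (right) Leibniz algebra is a vector space $L$ with bilinear bracket satisfying $[x,[y,z]]=[[x,y],z]-[[x,z],y]$. Unlisted products of basis elements are zero. A derivation is a linear map $d$ with $d([x,y])=[d(x),y]+[x,d(y)]$; an anti-derivation is a linear map $D$ with $D([x,y])=[D(x),y]-[D(y),x]$. A biderivation of $L$ is a pair $(d,D)$ with $d$ a derivation, $D$ an anti-derivation, and $[x,d(y)]=[x,D(y)]$ for all $x,y\in L$. *)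

theory Defs
  imports Main "HOL-Analysis.Analysis"
begin

text \<open>The algebra NF_n is modelled on coordinate vectors v :: nat => complex
  supported on {1..n}; coordinate k is the coefficient of basis vector e_k.\<close>

definition nf_space :: "nat \<Rightarrow> (nat \<Rightarrow> complex) set" where
  "nf_space n = {v. \<forall>k. k \<notin> {1..n} \<longrightarrow> v k = 0}"

definition nf_basis :: "nat \<Rightarrow> nat \<Rightarrow> complex" where
  "nf_basis i = (\<lambda>k. if k = i then 1 else 0)"

definition nf_bracket :: "nat \<Rightarrow> (nat \<Rightarrow> complex) \<Rightarrow> (nat \<Rightarrow> complex) \<Rightarrow> (nat \<Rightarrow> complex)" where
  "nf_bracket n x y =
     (\<lambda>k. \<Sum>i\<in>{1..n}. \<Sum>j\<in>{1..n}.
        x i * y j * (if j = 1 \<and> i \<le> n - 1 then nf_basis (i + 1) k else 0))"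

definition nf_linear :: "nat \<Rightarrow> ((nat \<Rightarrow> complex) \<Rightarrow> (nat \<Rightarrow> complex)) \<Rightarrow> bool" where
  "nf_linear n f \<longleftrightarrow>
     (\<forall>x\<in>nf_space n. f x \<in> nf_space n) \<and>
     (\<forall>x\<in>nf_space n. \<forall>y\<in>nf_space n. f (\<lambda>k. x k + y k) = (\<lambda>k. f x k + f y k)) \<and>
     (\<forall>c. \<forall>x\<in>nf_space n. f (\<lambda>k. c * x k) = (\<lambda>k. c * f x k))"

definition nf_derivation :: "nat \<Rightarrow> ((nat \<Rightarrow> complex) \<Rightarrow> (nat \<Rightarrow> complex)) \<Rightarrow> bool" where
  "nf_derivation n d \<longleftrightarrow> nf_linear n d \<and>
     (\<forall>x\<in>nf_space n. \<forall>y\<in>nf_space n.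
        d (nf_bracket n x y) = (\<lambda>k. nf_bracket n (d x) y k + nf_bracket n x (d y) k))"

definition nf_antiderivation :: "nat \<Rightarrow> ((nat \<Rightarrow> complex) \<Rightarrow> (nat \<Rightarrow> complex)) \<Rightarrow> bool" where
  "nf_antiderivation n D \<longleftrightarrow> nf_linear n D \<and>
     (\<forall>x\<in>nf_space n. \<forall>y\<in>nf_space n.
        D (nf_bracket n x y) = (\<lambda>k. nf_bracket n (D x) y k - nf_bracket n (D y) x k))"

definition nf_biderivation :: "nat \<Rightarrow> ((nat \<Rightarrow> complex) \<Rightarrow> (nat \<Rightarrow> complex))
     \<Rightarrow> ((nat \<Rightarrow> complex) \<Rightarrow> (nat \<Rightarrow> complex)) \<Rightarrow> bool" where
  "nf_biderivation n d D \<longleftrightarrow> nf_derivation n d \<and> nf_antiderivation n D \<and>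
     (\<forall>x\<in>nf_space n. \<forall>y\<in>nf_space n. nf_bracket n x (d y) = nf_bracket n x (D y))"

end

(*
  For n >= 1 the bracket of NF_n is [x,y] = y_1 S x, where S is the shift e_i -> e_(i+1),
  e_n -> 0. Taking y = e_1 in the derivation rule gives d (S x) = S (d x) + a S x with
  a = (d e_1)_1, so d e_(i+1) = d (S e_i) is determined by alpha = d e_1, and this recurrence
  produces the triangular Toeplitz columns of the theorem. Conversely the rule is linear in x,
  so it holds as soon as the columns satisfy the same recurrence. Likewise y = e_1 in the
  anti-derivation rule gives D (S x) = S (D x) - x_1 S (D e_1), which kills D e_2, ..., D e_n;
  conversely such a D is x -> x_1 D e_1, and it vanishes on brackets since [x,y] has no e_1
  component. Finally [x, d y] = [x, D y] for all x just says (d y)_1 = (D y)_1, which for such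
  d and D means (D e_1)_1 = a.
*)
theory Submission
  imports Defs
begin

lemma sum_nf_basis:
  "finite A \<Longrightarrow> (\<Sum>j\<in>A. c j * nf_basis j k) = (if k \<in> A then c k else 0)"
  by (simp add: nf_basis_def if_distrib[of "\<lambda>b. c _ * b"] cong: if_cong)

lemma nf_basis_in_space: "i \<in> {1..n} \<Longrightarrow> nf_basis i \<in> nf_space n"
  by (auto simp: nf_space_def nf_basis_def)

lemma nf_space_expansion: "x \<in> nf_space n \<Longrightarrow> x = (\<lambda>k. \<Sum>i\<in>{1..n}. x i * nf_basis i k)"
  by (auto simp: sum_nf_basis nf_space_def)

lemma nf_space_expansion_first:
  assumes "x \<in> nf_space n"
  shows "x = (\<lambda>k. x 1 * nf_basis 1 k + (\<Sum>j\<in>{2..n}. x j * nf_basis j k))"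
  using assms unfolding fun_eq_iff
  by (simp add: sum_nf_basis) (auto simp: nf_space_def nf_basis_def)

lemma nf_linear_maps_to: "nf_linear n f \<Longrightarrow> x \<in> nf_space n \<Longrightarrow> f x \<in> nf_space n"
  by (simp add: nf_linear_def)

lemma nf_linear_additive:
  "nf_linear n f \<Longrightarrow> x \<in> nf_space n \<Longrightarrow> y \<in> nf_space n \<Longrightarrow>
    f (\<lambda>k. x k + y k) = (\<lambda>k. f x k + f y k)"
  by (simp add: nf_linear_def)

lemma nf_linear_homogeneous:
  "nf_linear n f \<Longrightarrow> x \<in> nf_space n \<Longrightarrow> f (\<lambda>k. c * x k) = (\<lambda>k. c * f x k)"
  by (simp add: nf_linear_def)

lemma nf_linear_zero: "nf_linear n f \<Longrightarrow> f (\<lambda>k. 0) = (\<lambda>k. 0)"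
  using nf_linear_homogeneous[of n f "\<lambda>k. 0" 0] by (simp add: nf_space_def)

lemma nf_linear_sum:
  assumes f: "nf_linear n f" and "finite A" and v: "\<forall>i\<in>A. v i \<in> nf_space n"
  shows "f (\<lambda>k. \<Sum>i\<in>A. c i * v i k) = (\<lambda>k. \<Sum>i\<in>A. c i * f (v i) k)"
  using \<open>finite A\<close> v
proof (induction A rule: finite_induct)
  case empty
  show ?case using nf_linear_zero[OF f] by simp
next
  case (insert a A)
  have "(\<lambda>k. c a * v a k) \<in> nf_space n" "(\<lambda>k. \<Sum>i\<in>A. c i * v i k) \<in> nf_space n"
    using insert.prems by (auto simp: nf_space_def)
  then show ?case
    using insert nf_linear_additive[OF f] nf_linear_homogeneous[OF f] by simp
qed

lemma nf_linear_expansion: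
  "nf_linear n f \<Longrightarrow> x \<in> nf_space n \<Longrightarrow> f x = (\<lambda>k. \<Sum>i\<in>{1..n}. x i * f (nf_basis i) k)"
  by (subst nf_space_expansion, assumption) (simp add: nf_linear_sum nf_basis_in_space)

lemma nf_linear_eqI:
  assumes "nf_linear n f" "nf_linear n g" "\<forall>i\<in>{1..n}. f (nf_basis i) = g (nf_basis i)"
    and "x \<in> nf_space n"
  shows "f x = g x"
  using assms by (simp add: nf_linear_expansion)

lemma nf_linear_coord_eq_first_column:
  assumes "nf_linear n f" "x \<in> nf_space n" "\<forall>i\<in>{2..n}. f (nf_basis i) k = 0"
  shows "f x k = x 1 * f (nf_basis 1) k"
proof -
  have "f x k = (\<Sum>i\<in>{1..n}. x i * f (nf_basis i) k)"
    using nf_linear_expansion[OF assms(1,2)] by simp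
  also have "\<dots> = (\<Sum>i\<in>{1..n}. if i = 1 then x 1 * f (nf_basis 1) k else 0)"
    using assms(3) by (intro sum.cong) auto
  also have "\<dots> = x 1 * f (nf_basis 1) k"
    using assms(2) by (cases "n = 0") (auto simp: nf_space_def)
  finally show ?thesis .
qed

lemma nf_linear_comp: "nf_linear n f \<Longrightarrow> nf_linear n g \<Longrightarrow> nf_linear n (f \<circ> g)"
  by (simp add: nf_linear_def)

lemma nf_linear_add_smult:
  "nf_linear n f \<Longrightarrow> nf_linear n g \<Longrightarrow> nf_linear n (\<lambda>x k. f x k + c * g x k)"
  by (auto simp: nf_linear_def nf_space_def algebra_simps)

definition nf_shift :: "nat \<Rightarrow> (nat \<Rightarrow> complex) \<Rightarrow> nat \<Rightarrow> complex" where
  "nf_shift n x k = (if 2 \<le> k \<and> k \<le> n then x (k - 1) else 0)"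

lemma nf_bracket_eq_shift:
  assumes "1 \<le> n"
  shows "nf_bracket n x y = (\<lambda>k. y 1 * nf_shift n x k)"
proof
  fix k
  have "nf_bracket n x y k = (\<Sum>i\<in>{1..n}. if i = k - 1 \<and> 2 \<le> k \<and> k \<le> n then x i * y 1 else 0)"
    unfolding nf_bracket_def using assms
    by (intro sum.cong) (auto simp: sum.remove[of _ 1] nf_basis_def)
  then show "nf_bracket n x y k = y 1 * nf_shift n x k"
    by (auto simp: nf_shift_def cong: if_cong)
qed

lemma nf_linear_shift: "nf_linear n (nf_shift n)"
  by (simp add: nf_linear_def nf_space_def nf_shift_def fun_eq_iff)

lemma nf_shift_basis: "1 \<le> i \<Longrightarrow> i < n \<Longrightarrow> nf_shift n (nf_basis i) = nf_basis (Suc i)"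
  by (auto simp: nf_shift_def nf_basis_def fun_eq_iff)

lemma nf_shift_basis_last: "nf_shift n (nf_basis n) = (\<lambda>k. 0)"
  by (auto simp: nf_shift_def nf_basis_def fun_eq_iff)

lemma nf_bracket_right_eq_iff:
  assumes "2 \<le> n"
  shows "(\<forall>x\<in>nf_space n. nf_bracket n x u = nf_bracket n x v) \<longleftrightarrow> u 1 = v 1"
proof
  assume "\<forall>x\<in>nf_space n. nf_bracket n x u = nf_bracket n x v"
  then have "nf_bracket n (nf_basis 1) u 2 = nf_bracket n (nf_basis 1) v 2"
    using assms nf_basis_in_space[of 1 n] by simp
  then show "u 1 = v 1"
    using assms by (simp add: nf_bracket_eq_shift nf_shift_def nf_basis_def)
qed (use assms in \<open>simp add: nf_bracket_eq_shift\<close>)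

definition nf_der_column :: "nat \<Rightarrow> (nat \<Rightarrow> complex) \<Rightarrow> nat \<Rightarrow> nat \<Rightarrow> complex" where
  "nf_der_column n \<alpha> i k =
     (if i \<le> k \<and> k \<le> n then (if k = i then of_nat i * \<alpha> 1 else \<alpha> (k - i + 1)) else 0)"

lemma nf_der_column_eq_sum:
  "i \<le> n \<Longrightarrow> nf_der_column n \<alpha> i =
     (\<lambda>k. of_nat i * \<alpha> 1 * nf_basis i k + (\<Sum>j\<in>{i+1..n}. \<alpha> (j - i + 1) * nf_basis j k))"
  unfolding fun_eq_iff by (simp add: sum_nf_basis) (auto simp: nf_der_column_def nf_basis_def)

lemma nf_der_column_1: "x \<in> nf_space n \<Longrightarrow> nf_der_column n x 1 = x"
  by (auto simp: nf_der_column_def nf_space_def fun_eq_iff)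

lemma nf_der_column_beyond: "n < i \<Longrightarrow> nf_der_column n \<alpha> i = (\<lambda>k. 0)"
  by (auto simp: nf_der_column_def fun_eq_iff)

lemma nf_der_column_Suc:
  "1 \<le> i \<Longrightarrow> nf_der_column n \<alpha> (Suc i) =
     (\<lambda>k. nf_shift n (nf_der_column n \<alpha> i) k + \<alpha> 1 * nf_shift n (nf_basis i) k)"
  by (auto simp: nf_der_column_def nf_shift_def nf_basis_def fun_eq_iff algebra_simps)

lemma nf_derivation_shift:
  assumes "1 \<le> n" "nf_derivation n d" "x \<in> nf_space n"
  shows "d (nf_shift n x) = (\<lambda>k. nf_shift n (d x) k + d (nf_basis 1) 1 * nf_shift n x k)"
proof -
  have "d (nf_bracket n x (nf_basis 1)) =
      (\<lambda>k. nf_bracket n (d x) (nf_basis 1) k + nf_bracket n x (d (nf_basis 1)) k)"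
    using assms nf_basis_in_space[of 1 n] unfolding nf_derivation_def by simp
  then show ?thesis
    using assms(1) by (simp add: nf_bracket_eq_shift nf_basis_def)
qed

lemma nf_derivation_on_basis:
  assumes "1 \<le> n" "nf_derivation n d" "i \<in> {1..n}"
  shows "d (nf_basis i) = nf_der_column n (d (nf_basis 1)) i"
proof -
  have "1 \<le> i" "i \<le> n" using assms(3) by auto
  then show ?thesis
  proof (induction i rule: nat_induct_at_least)
    case base
    show ?case
      using assms(1,2) nf_der_column_1 nf_linear_maps_to nf_basis_in_space
      unfolding nf_derivation_def by simp
  next
    case (Suc i)
    have "d (nf_basis (Suc i)) = d (nf_shift n (nf_basis i))"
      using Suc nf_shift_basis by simp
    also have "\<dots> = nf_der_column n (d (nf_basis 1)) (Suc i)"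
      using Suc nf_derivation_shift[OF assms(1,2)] nf_basis_in_space nf_der_column_Suc by simp
    finally show ?case .
  qed
qed

lemma nf_derivation_columns_coord_1:
  assumes "1 \<le> n" "nf_linear n d" "\<forall>i\<in>{1..n}. d (nf_basis i) = nf_der_column n \<alpha> i"
    and "y \<in> nf_space n"
  shows "d y 1 = \<alpha> 1 * y 1"
  using nf_linear_coord_eq_first_column[OF assms(2,4), of 1] assms(1,3)
  by (simp add: nf_der_column_def)

lemma nf_derivation_columns_shift:
  assumes "nf_linear n d" "\<forall>i\<in>{1..n}. d (nf_basis i) = nf_der_column n \<alpha> i"
    and "x \<in> nf_space n"
  shows "d (nf_shift n x) = (\<lambda>k. nf_shift n (d x) k + \<alpha> 1 * nf_shift n x k)"
proof -
  have "(d \<circ> nf_shift n) x = (\<lambda>x k. (nf_shift n \<circ> d) x k + \<alpha> 1 * nf_shift n x k) x"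
  proof (rule nf_linear_eqI[OF _ _ _ assms(3)])
    show "nf_linear n (d \<circ> nf_shift n)"
      by (rule nf_linear_comp[OF assms(1) nf_linear_shift])
    show "nf_linear n (\<lambda>x k. (nf_shift n \<circ> d) x k + \<alpha> 1 * nf_shift n x k)"
      by (rule nf_linear_add_smult[OF nf_linear_comp[OF nf_linear_shift assms(1)] nf_linear_shift])
    have "d (nf_shift n (nf_basis i)) = nf_der_column n \<alpha> (Suc i)" if "i \<in> {1..n}" for i
    proof (cases "i < n")
      case True
      then show ?thesis using that assms(2) nf_shift_basis by simp
    next
      case False
      then show ?thesis
        using that nf_shift_basis_last nf_linear_zero[OF assms(1)] nf_der_column_beyond by simp
    qed
    then show "\<forall>i\<in>{1..n}. (d \<circ> nf_shift n) (nf_basis i) =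
        (\<lambda>x k. (nf_shift n \<circ> d) x k + \<alpha> 1 * nf_shift n x k) (nf_basis i)"
      using assms(2) nf_der_column_Suc by simp
  qed
  then show ?thesis by simp
qed

lemma nf_derivationI:
  assumes "1 \<le> n" "nf_linear n d" "\<forall>i\<in>{1..n}. d (nf_basis i) = nf_der_column n \<alpha> i"
  shows "nf_derivation n d"
  unfolding nf_derivation_def nf_bracket_eq_shift[OF assms(1)]
proof (intro conjI ballI assms(2))
  fix x y assume x: "x \<in> nf_space n" and y: "y \<in> nf_space n"
  have "nf_shift n x \<in> nf_space n"
    using nf_linear_maps_to[OF nf_linear_shift x] .
  then show "d (\<lambda>k. y 1 * nf_shift n x k) = (\<lambda>k. y 1 * nf_shift n (d x) k + d y 1 * nf_shift n x k)"
    using nf_linear_homogeneous[OF assms(2)] nf_derivation_columns_shift[OF assms(2,3) x]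
      nf_derivation_columns_coord_1[OF assms y]
    by (simp add: algebra_simps)
qed

lemma nf_antiderivation_shift:
  assumes "1 \<le> n" "nf_antiderivation n D" "x \<in> nf_space n"
  shows "D (nf_shift n x) = (\<lambda>k. nf_shift n (D x) k - x 1 * nf_shift n (D (nf_basis 1)) k)"
proof -
  have "D (nf_bracket n x (nf_basis 1)) =
      (\<lambda>k. nf_bracket n (D x) (nf_basis 1) k - nf_bracket n (D (nf_basis 1)) x k)"
    using assms nf_basis_in_space[of 1 n] unfolding nf_antiderivation_def by simp
  then show ?thesis
    using assms(1) by (simp add: nf_bracket_eq_shift nf_basis_def)
qed

lemma nf_antiderivation_on_basis:
  assumes "nf_antiderivation n D" "i \<in> {2..n}"
  shows "D (nf_basis i) = (\<lambda>k. 0)"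
proof -
  have "2 \<le> i" "i \<le> n" using assms(2) by auto
  then show ?thesis
  proof (induction i rule: nat_induct_at_least)
    case base
    have "D (nf_basis 2) = D (nf_shift n (nf_basis 1))"
      using base nf_shift_basis[of 1 n] by (simp add: numeral_2_eq_2)
    then show ?case
      using base nf_antiderivation_shift[OF _ assms(1)] nf_basis_in_space[of 1 n]
      by (simp add: nf_basis_def)
  next
    case (Suc i)
    have "D (nf_basis (Suc i)) = D (nf_shift n (nf_basis i))"
      using Suc nf_shift_basis by simp
    also have "\<dots> = nf_shift n (D (nf_basis i))"
      using Suc nf_antiderivation_shift[OF _ assms(1)] nf_basis_in_space[of i n]
      by (simp add: nf_basis_def)
    also have "\<dots> = (\<lambda>k. 0)"
      using Suc nf_linear_zero[OF nf_linear_shift] by simp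
    finally show ?case .
  qed
qed

lemma nf_antiderivationI:
  assumes "1 \<le> n" "nf_linear n D" "\<forall>i\<in>{2..n}. D (nf_basis i) = (\<lambda>k. 0)"
  shows "nf_antiderivation n D"
proof -
  have D: "D x = (\<lambda>k. x 1 * D (nf_basis 1) k)" if "x \<in> nf_space n" for x
    using nf_linear_coord_eq_first_column[OF assms(2) that] assms(3) by auto
  show ?thesis
    unfolding nf_antiderivation_def nf_bracket_eq_shift[OF assms(1)]
  proof (intro conjI ballI assms(2) ext)
    fix x y k assume x: "x \<in> nf_space n" and y: "y \<in> nf_space n"
    have "D (\<lambda>k. y 1 * nf_shift n x k) = (\<lambda>k. y 1 * nf_shift n x 1 * D (nf_basis 1) k)"
      by (rule D) (simp add: nf_space_def nf_shift_def)
    then show "D (\<lambda>k. y 1 * nf_shift n x k) k = y 1 * nf_shift n (D x) k - x 1 * nf_shift n (D y) k"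
      using D[OF x] D[OF y] by (simp add: nf_shift_def)
  qed
qed

lemma nf_biderivation_iff:
  assumes "2 \<le> n"
  shows "nf_biderivation n d D \<longleftrightarrow>
    nf_derivation n d \<and> nf_antiderivation n D \<and> D (nf_basis 1) 1 = d (nf_basis 1) 1"
proof -
  have n: "1 \<le> n" and e1: "nf_basis 1 \<in> nf_space n"
    using assms by (simp_all add: nf_basis_in_space)
  have "d y 1 = D y 1"
    if der: "nf_derivation n d" and anti: "nf_antiderivation n D"
      and D_e1: "D (nf_basis 1) 1 = d (nf_basis 1) 1" and y: "y \<in> nf_space n" for y
  proof -
    have "nf_linear n d" "\<forall>i\<in>{1..n}. d (nf_basis i) = nf_der_column n (d (nf_basis 1)) i"
      using der nf_derivation_on_basis[OF n der] unfolding nf_derivation_def by blast+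
    then have "d y 1 = d (nf_basis 1) 1 * y 1"
      using nf_derivation_columns_coord_1[OF n _ _ y] by blast
    moreover have "D y 1 = y 1 * D (nf_basis 1) 1"
      using nf_linear_coord_eq_first_column[OF _ y] nf_antiderivation_on_basis[OF anti] anti
      unfolding nf_antiderivation_def by simp
    ultimately show ?thesis
      using D_e1 by simp
  qed
  moreover have "(\<forall>x\<in>nf_space n. \<forall>y\<in>nf_space n. nf_bracket n x (d y) = nf_bracket n x (D y)) \<longleftrightarrow>
      (\<forall>y\<in>nf_space n. d y 1 = D y 1)"
    using nf_bracket_right_eq_iff[OF assms] by blast
  ultimately show ?thesis
    unfolding nf_biderivation_def using e1 by metis
qed

theorem mainTheorem2:
  fixes n :: nat and d D :: "(nat \<Rightarrow> complex) \<Rightarrow> (nat \<Rightarrow> complex)"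
  assumes "n \<ge> 2" and "nf_linear n d" and "nf_linear n D"
  shows "nf_biderivation n d D \<longleftrightarrow>
    (\<exists>\<alpha> \<beta> :: nat \<Rightarrow> complex.
      (\<forall>i\<in>{1..n}. d (nf_basis i) =
         (\<lambda>k. of_nat i * \<alpha> 1 * nf_basis i k + (\<Sum>j\<in>{i+1..n}. \<alpha> (j - i + 1) * nf_basis j k))) \<and>
      D (nf_basis 1) = (\<lambda>k. \<alpha> 1 * nf_basis 1 k + (\<Sum>j\<in>{2..n}. \<beta> j * nf_basis j k)) \<and>
      (\<forall>i\<in>{2..n}. D (nf_basis i) = (\<lambda>k. 0)))"
proof -
  have n: "1 \<le> n" and e1: "nf_basis 1 \<in> nf_space n"
    using assms(1) by (simp_all add: nf_basis_in_space)
  show ?thesis (is "_ \<longleftrightarrow> (\<exists>\<alpha> \<beta>. ?d_basis \<alpha> \<and> ?D_e1 \<alpha> \<beta> \<and> ?D_basis)")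
    unfolding nf_biderivation_iff[OF assms(1)]
  proof (intro iffI; elim conjE exE)
    assume der: "nf_derivation n d" and anti: "nf_antiderivation n D"
      and D_e1_1: "D (nf_basis 1) 1 = d (nf_basis 1) 1"
    define \<alpha> \<beta> where "\<alpha> = d (nf_basis 1)" and "\<beta> = D (nf_basis 1)"
    have "\<beta> 1 = \<alpha> 1"
      unfolding \<alpha>_def \<beta>_def by (rule D_e1_1)
    moreover have "D (nf_basis 1) = (\<lambda>k. \<beta> 1 * nf_basis 1 k + (\<Sum>j\<in>{2..n}. \<beta> j * nf_basis j k))"
      unfolding \<beta>_def by (rule nf_space_expansion_first[OF nf_linear_maps_to[OF assms(3) e1]])
    ultimately have "?D_e1 \<alpha> \<beta>"
      by simp
    moreover have "?d_basis \<alpha>"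
      using nf_derivation_on_basis[OF n der] nf_der_column_eq_sum unfolding \<alpha>_def[symmetric]
      by simp
    moreover have ?D_basis
      using nf_antiderivation_on_basis[OF anti] by blast
    ultimately show "\<exists>\<alpha> \<beta>. ?d_basis \<alpha> \<and> ?D_e1 \<alpha> \<beta> \<and> ?D_basis"
      by blast
  next
    fix \<alpha> \<beta> assume d_basis: "?d_basis \<alpha>" and D_e1: "?D_e1 \<alpha> \<beta>" and D_basis: ?D_basis
    have d_columns: "\<forall>i\<in>{1..n}. d (nf_basis i) = nf_der_column n \<alpha> i"
      using d_basis nf_der_column_eq_sum by simp
    have "D (nf_basis 1) 1 = d (nf_basis 1) 1"
      using D_e1 d_columns n by (simp add: sum_nf_basis nf_basis_def nf_der_column_def)
    then show "nf_derivation n d \<and> nf_antiderivation n D \<and> D (nf_basis 1) 1 = d (nf_basis 1) 1"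
      using nf_derivationI[OF n assms(2) d_columns] nf_antiderivationI[OF n assms(3) D_basis]
      by blast
  qed
qed

end
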